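(* Let $n\geq1$ be an integer and $z\in\mathbb{C}$ with $|z|<1$ and $|1-z|\left(n+\frac12\right)<1$. Then \[ \left|\sum_{k=n+1}^\infty\frac{z^k}{k}\right|< |z|^{n+1}\left(-\log\left(|1-z|\left(n+\frac{1}{2}\right)\right)+C_3\right),\qquad C_3=\sqrt{(\pi/2)^2+1}. \] *)

theory Defs
  imports "HOL-Analysis.Analysis"
begin

end

theory Submission
  imports Defs
begin

text \<open>
  Put m = n + 1 and r = |1 - z|, so that the series is z^m S with S = sum_k z^k / (k + m),
  and split S at the index K = ceil (2 / r). A term of the finite head has modulus at most
  1/j <= ln (j + 1/2) - ln (j - 1/2), so the head telescopes to at most
  ln (r (K - 1/2)) - ln (r (m - 1/2)). Summation by parts gives |(1 - z) sum_k a_k z^k| <= 2 a_0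
  for every decreasing null sequence a, which bounds the tail by 2 / (r K). The choice of K makes
  ln (r (K - 1/2)) + 2 / (r K) <= ln 2 + 1, and ln 2 + 1 < C_3.
\<close>

lemma two_mul_le_ln_one_plus_minus_ln_one_minus:
  fixes y :: real
  assumes "0 \<le> y" "y < 1"
  shows "2 * y \<le> ln (1 + y) - ln (1 - y)"
proof -
  let ?g = "\<lambda>x::real. ln (1 + x) - ln (1 - x) - 2 * x"
  have "?g 0 \<le> ?g y"
  proof (rule DERIV_nonneg_imp_increasing_open[OF assms(1)])
    fix x :: real assume x: "0 < x" "x < y"
    then have "(?g has_real_derivative (1 / (1 + x) + 1 / (1 - x) - 2)) (at x)"
      using assms by (auto intro!: derivative_eq_intros)
    moreover have "1 / (1 + x) + 1 / (1 - x) - 2 = 2 * x\<^sup>2 / ((1 + x) * (1 - x))"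
      using x assms by (simp add: divide_simps power2_eq_square) (simp add: algebra_simps)
    moreover have "0 \<le> 2 * x\<^sup>2 / ((1 + x) * (1 - x))"
      using x assms by simp
    ultimately show "\<exists>d. (?g has_real_derivative d) (at x) \<and> 0 \<le> d"
      by auto
  qed (use assms in \<open>auto intro!: continuous_intros\<close>)
  then show ?thesis by simp
qed

lemma inverse_le_ln_diff_half:
  fixes x :: real
  assumes "1/2 < x"
  shows "1 / x \<le> ln (x + 1/2) - ln (x - 1/2)"
proof -
  have "2 * (1 / (2 * x)) \<le> ln (1 + 1 / (2 * x)) - ln (1 - 1 / (2 * x))"
    using assms by (intro two_mul_le_ln_one_plus_minus_ln_one_minus) (auto simp: field_simps)
  also have "\<dots> = ln ((x + 1/2) / x) - ln ((x - 1/2) / x)"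
    using assms by (simp add: field_simps)
  also have "\<dots> = ln (x + 1/2) - ln (x - 1/2)"
    using assms by (simp add: ln_div)
  finally show ?thesis by simp
qed

lemma sum_inverse_le_ln_diff:
  fixes m N :: nat
  assumes "1 \<le> m"
  shows "(\<Sum>k<N. 1 / real (k + m)) \<le> ln (real (N + m) - 1/2) - ln (real m - 1/2)"
proof (induction N)
  case (Suc N)
  have "1 / real (N + m) \<le> ln (real (N + m) + 1/2) - ln (real (N + m) - 1/2)"
    using assms by (intro inverse_le_ln_diff_half) auto
  with Suc show ?case by (simp add: algebra_simps)
qed simp

lemma norm_sum_power_div_le_ln_diff:
  fixes z :: "'a::real_normed_field" and m N :: nat
  assumes "norm z \<le> 1" "1 \<le> m"
  shows "norm (\<Sum>k<N. z ^ k / of_nat (k + m)) \<le> ln (real (N + m) - 1/2) - ln (real m - 1/2)"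
proof -
  have "norm (\<Sum>k<N. z ^ k / of_nat (k + m)) \<le> (\<Sum>k<N. 1 / real (k + m))"
  proof (rule order_trans[OF norm_sum sum_mono])
    fix k
    have "norm (z ^ k / of_nat (k + m)) = norm z ^ k / real (k + m)"
      by (simp only: norm_divide norm_power norm_of_nat)
    also have "\<dots> \<le> 1 / real (k + m)"
      using assms(1) by (simp add: power_le_one divide_right_mono)
    finally show "norm (z ^ k / of_nat (k + m)) \<le> 1 / real (k + m)" .
  qed
  also have "\<dots> \<le> ln (real (N + m) - 1/2) - ln (real m - 1/2)"
    using assms(2) by (rule sum_inverse_le_ln_diff)
  finally show ?thesis .
qed

lemma summable_power_div_of_nat_add:
  fixes z :: "'a::{real_normed_field,banach}"
  assumes "norm z < 1"
  shows "summable (\<lambda>k. z ^ k / of_nat (k + m))"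
proof (rule summable_comparison_test[OF _ summable_geometric])
  have "norm (z ^ k / of_nat (k + m)) \<le> norm z ^ k" if "1 \<le> k" for k
  proof -
    have "norm (z ^ k / of_nat (k + m)) = norm z ^ k / real (k + m)"
      by (simp only: norm_divide norm_power norm_of_nat)
    also have "\<dots> \<le> norm z ^ k / 1"
      using that by (intro divide_left_mono) auto
    finally show ?thesis by simp
  qed
  then show "\<exists>N. \<forall>k\<ge>N. norm (z ^ k / of_nat (k + m)) \<le> norm z ^ k"
    by blast
qed (use assms in auto)

lemma norm_one_minus_mult_suminf_le:
  fixes z :: "'a::{real_normed_field,banach}" and a :: "nat \<Rightarrow> real"
  assumes z: "norm z < 1" and a: "decseq a" "a \<longlonglongrightarrow> 0"
  shows "norm ((1 - z) * (\<Sum>k. of_real (a k) * z ^ k)) \<le> 2 * a 0"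
proof -
  define w where "w k = of_real (a k) * z ^ k" for k
  have a_nonneg: "0 \<le> a k" for k
    using decseq_ge[OF a] .
  have a_le: "a (Suc k) \<le> a k" for k
    using a(1) by (simp add: decseq_Suc_iff)
  have "summable w"
  proof (rule summable_comparison_test[OF _ summable_mult[OF summable_geometric]])
    show "\<exists>N. \<forall>k\<ge>N. norm (w k) \<le> a 0 * norm z ^ k"
      using a(1) a_nonneg
      by (auto simp: w_def norm_mult norm_power decseq_def intro!: mult_right_mono)
  qed (use z in auto)
  then have w_sums: "w sums (\<Sum>k. w k)"
    by (rule summable_sums)
  define d where "d k = w (Suc k) - z * w k" for k
  have d_sums: "d sums ((1 - z) * (\<Sum>k. w k) - w 0)"
  proof -
    have "(\<lambda>k. w (Suc k)) sums ((\<Sum>k. w k) - w 0)"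
      using w_sums by (simp add: sums_Suc_iff)
    then have "d sums ((\<Sum>k. w k) - w 0 - z * (\<Sum>k. w k))"
      unfolding d_def by (intro sums_diff sums_mult w_sums)
    then show ?thesis by (simp add: algebra_simps)
  qed
  have "norm (d k) \<le> a k - a (Suc k)" for k
  proof -
    have "d k = of_real (a (Suc k) - a k) * z ^ Suc k"
      by (simp add: d_def w_def algebra_simps)
    then have "norm (d k) = \<bar>a (Suc k) - a k\<bar> * norm z ^ Suc k"
      by (simp only: norm_mult norm_power norm_of_real)
    also have "\<dots> = (a k - a (Suc k)) * norm z ^ Suc k"
      using a_le[of k] by simp
    also have "\<dots> \<le> a k - a (Suc k)"
      using a_le[of k] z by (intro mult_left_le power_le_one) auto
    finally show ?thesis .
  qed
  then have "norm ((1 - z) * (\<Sum>k. w k) - w 0) \<le> a 0 - 0"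
    using d_sums telescope_sums'[OF a(2)] by (rule norm_sums_le[rotated 2])
  moreover have "norm (w 0) = a 0"
    using a_nonneg by (simp add: w_def)
  moreover have "norm ((1 - z) * (\<Sum>k. w k)) \<le> norm (w 0) + norm ((1 - z) * (\<Sum>k. w k) - w 0)"
    by (rule norm_triangle_sub)
  ultimately show ?thesis
    by (simp add: w_def)
qed

corollary norm_one_minus_mult_suminf_power_div_le:
  fixes z :: "'a::{real_normed_field,banach}"
  assumes "norm z < 1" "1 \<le> m"
  shows "norm ((1 - z) * (\<Sum>k. z ^ k / of_nat (k + m))) \<le> 2 / real m"
proof -
  have "decseq (\<lambda>k. 1 / real (k + m))"
    using assms(2) by (auto simp: decseq_def frac_le)
  moreover have "(\<lambda>k. 1 / real (k + m)) \<longlonglongrightarrow> 0"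
    using LIMSEQ_ignore_initial_segment[OF lim_1_over_n, of m] by simp
  ultimately have "norm ((1 - z) * (\<Sum>k. of_real (1 / real (k + m)) * z ^ k)) \<le> 2 * (1 / real m)"
    using norm_one_minus_mult_suminf_le[OF assms(1)] by fastforce
  then show ?thesis
    by (simp add: divide_inverse mult.commute)
qed

lemma ln_2_plus_1_less_sqrt:
  "ln 2 + 1 < sqrt ((pi / 2)\<^sup>2 + 1)"
proof -
  have "(3/2 :: real)\<^sup>2 < (pi / 2)\<^sup>2"
    using pi_gt3 by (intro power_strict_mono) auto
  then have "sqrt (13/4) < sqrt ((pi / 2)\<^sup>2 + 1)"
    by (simp add: power2_eq_square)
  moreover have "ln 2 + 1 \<le> sqrt (13/4)"
    using ln2_le_25_over_36 real_le_rsqrt[of "61/36" "13/4"] by (simp add: power2_eq_square)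
  ultimately show ?thesis by linarith
qed

lemma ln_mult_plus_le_at_cutoff:
  fixes r K :: real
  assumes r: "0 < r" "r < 2" and K: "2 / r \<le> K" "K < 2 / r + 1"
  shows "ln (r * (K - 1/2)) + 2 / (r * K) \<le> ln 2 + 1"
proof -
  define u where "u = r * K"
  have u: "2 \<le> u" "u < 2 + r"
    using r K by (simp_all add: u_def field_simps)
  have "r * (K - 1/2) = 2 * ((u - r/2) / 2)"
    by (simp add: u_def algebra_simps)
  also have "ln (2 * ((u - r/2) / 2)) = ln 2 + ln ((u - r/2) / 2)"
    using u r by (intro ln_mult_pos) auto
  finally have "ln (r * (K - 1/2)) = ln 2 + ln ((u - r/2) / 2)" .
  also have "ln ((u - r/2) / 2) \<le> (u - r/2) / 2 - 1"
    using u r by (intro ln_le_minus_one) auto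
  finally have "ln (r * (K - 1/2)) + 2 / (r * K) \<le> ln 2 + ((u - r/2) / 2 - 1 + 2 / u)"
    by (simp add: u_def)
  also have "(u - r/2) / 2 - 1 + 2 / u = 1 + ((u - 2)\<^sup>2 - r * u / 2) / (2 * u)"
    using u by (simp add: field_simps power2_eq_square)
  also have "((u - 2)\<^sup>2 - r * u / 2) / (2 * u) \<le> 0"
  proof (rule divide_nonpos_pos)
    have "(u - 2)\<^sup>2 \<le> r * (u - 2)"
      using u unfolding power2_eq_square by (intro mult_right_mono) auto
    also have "\<dots> \<le> r * (u / 2)"
      using u r by (intro mult_left_mono) auto
    finally show "(u - 2)\<^sup>2 - r * u / 2 \<le> 0" by simp
  qed (use u in simp)
  finally show ?thesis by simp
qed

lemma norm_suminf_power_div_of_nat_add_le_split: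
  fixes z :: "'a::{real_normed_field,banach}" and m K :: nat
  assumes z: "norm z < 1" and "1 \<le> m" "m \<le> K"
  shows "norm (\<Sum>k. z ^ k / of_nat (k + m))
           \<le> ln (real K - 1/2) - ln (real m - 1/2) + 2 / (norm (1 - z) * real K)"
proof -
  define N where "N = K - m"
  have NK: "N + m = K" using \<open>m \<le> K\<close> by (simp add: N_def)
  have "(\<Sum>k. z ^ k / of_nat (k + m))
          = (\<Sum>k. z ^ (k + N) / of_nat (k + N + m)) + (\<Sum>k<N. z ^ k / of_nat (k + m))"
    using suminf_split_initial_segment[OF summable_power_div_of_nat_add[OF z]] by simp
  also have "(\<Sum>k. z ^ (k + N) / of_nat (k + N + m)) = (\<Sum>k. z ^ N * (z ^ k / of_nat (k + K)))"
    by (intro arg_cong[where f = suminf] ext) (simp add: power_add add.assoc NK mult.commute)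
  also have "\<dots> = z ^ N * (\<Sum>k. z ^ k / of_nat (k + K))"
    by (rule suminf_mult[OF summable_power_div_of_nat_add[OF z]])
  finally have split: "(\<Sum>k. z ^ k / of_nat (k + m))
                         = z ^ N * (\<Sum>k. z ^ k / of_nat (k + K)) + (\<Sum>k<N. z ^ k / of_nat (k + m))" .
  have head: "norm (\<Sum>k<N. z ^ k / of_nat (k + m)) \<le> ln (real K - 1/2) - ln (real m - 1/2)"
    using norm_sum_power_div_le_ln_diff[of z m N] z \<open>1 \<le> m\<close> by (simp add: NK)
  have "z \<noteq> 1" using z by auto
  have "norm (z ^ N * (\<Sum>k. z ^ k / of_nat (k + K))) \<le> norm (\<Sum>k. z ^ k / of_nat (k + K))"
    using z by (simp add: norm_mult norm_power mult_left_le_one_le power_le_one)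
  also have "\<dots> \<le> 2 / (norm (1 - z) * real K)"
    using norm_one_minus_mult_suminf_power_div_le[OF z, of K] assms(2,3) \<open>z \<noteq> 1\<close>
    by (simp add: norm_mult pos_le_divide_eq mult.commute)
  finally have tail: "norm (z ^ N * (\<Sum>k. z ^ k / of_nat (k + K))) \<le> 2 / (norm (1 - z) * real K)" .
  show ?thesis
    unfolding split using norm_triangle_le[OF add_mono[OF tail head]] by simp
qed

lemma norm_suminf_power_div_of_nat_add_less:
  fixes z :: "'a::{real_normed_field,banach}" and m :: nat
  assumes z: "norm z < 1" and m: "1 \<le> m" and small: "norm (1 - z) * (real m - 1/2) < 1"
  shows "norm (\<Sum>k. z ^ k / of_nat (k + m))
           < - ln (norm (1 - z) * (real m - 1/2)) + sqrt ((pi / 2)\<^sup>2 + 1)"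
proof -
  define r where "r = norm (1 - z)"
  have "z \<noteq> 1" using z by auto
  then have r_pos: "0 < r" by (simp add: r_def)
  have "r * (1/2) \<le> r * (real m - 1/2)"
    using r_pos m by (intro mult_left_mono) auto
  then have r_less: "r < 2" using small by (simp add: r_def)
  have "r * real m < 1 + r / 2"
    using small by (simp add: r_def algebra_simps)
  then have "real m \<le> 2 / r"
    using r_pos r_less by (simp add: field_simps)
  define K where "K = nat \<lceil>2 / r\<rceil>"
  have K: "2 / r \<le> real K" "real K < 2 / r + 1"
    using r_pos by (simp_all add: K_def) linarith
  with \<open>real m \<le> 2 / r\<close> have "m \<le> K" by simp
  have "ln (real K - 1/2) - ln (real m - 1/2) = ln (r * (real K - 1/2)) - ln (r * (real m - 1/2))"
    using r_pos m \<open>m \<le> K\<close> by (simp add: ln_mult_pos)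
  then have "norm (\<Sum>k. z ^ k / of_nat (k + m))
               \<le> ln (r * (real K - 1/2)) + 2 / (r * real K) - ln (r * (real m - 1/2))"
    using norm_suminf_power_div_of_nat_add_le_split[OF z m \<open>m \<le> K\<close>] by (simp add: r_def)
  also have "\<dots> \<le> ln 2 + 1 - ln (r * (real m - 1/2))"
    using ln_mult_plus_le_at_cutoff[OF r_pos r_less K] by simp
  also have "\<dots> < - ln (r * (real m - 1/2)) + sqrt ((pi / 2)\<^sup>2 + 1)"
    using ln_2_plus_1_less_sqrt by simp
  finally show ?thesis by (simp add: r_def)
qed

theorem theorem7:
  fixes n :: nat and z :: complex
  assumes "n \<ge> 1"
    and "norm z < 1"
    and "norm (1 - z) * (real n + 1/2) < 1"
  shows "norm (\<Sum>k. z ^ (k + n + 1) / of_nat (k + n + 1))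
           < norm z ^ (n + 1) * (- ln (norm (1 - z) * (real n + 1/2)) + sqrt ((pi/2)^2 + 1))"
proof -
  have "z \<noteq> 0"
    using assms(1,3) by auto
  have "(\<Sum>k. z ^ (k + n + 1) / of_nat (k + n + 1))
          = (\<Sum>k. z ^ (n + 1) * (z ^ k / of_nat (k + (n + 1))))"
    by (intro arg_cong[where f = suminf] ext) (simp add: power_add add.assoc)
  also have "\<dots> = z ^ (n + 1) * (\<Sum>k. z ^ k / of_nat (k + (n + 1)))"
    by (rule suminf_mult[OF summable_power_div_of_nat_add[OF assms(2)]])
  finally have "norm (\<Sum>k. z ^ (k + n + 1) / of_nat (k + n + 1))
               = norm z ^ (n + 1) * norm (\<Sum>k. z ^ k / of_nat (k + (n + 1)))"
    by (simp add: norm_mult norm_power)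
  also have "\<dots> < norm z ^ (n + 1) * (- ln (norm (1 - z) * (real n + 1/2)) + sqrt ((pi/2)^2 + 1))"
  proof (rule mult_strict_left_mono)
    show "norm (\<Sum>k. z ^ k / of_nat (k + (n + 1)))
            < - ln (norm (1 - z) * (real n + 1/2)) + sqrt ((pi/2)^2 + 1)"
      using norm_suminf_power_div_of_nat_add_less[OF assms(2), of "n + 1"] assms(3)
      by (simp add: add_ac)
  qed (use \<open>z \<noteq> 0\<close> in simp)
  finally show ?thesis .
qed

end
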